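(* Let $F\in\mathcal S^\sharp$ and $t<0$. Then the entire function $F_t$ has at least one zero in $\mathbb C$.
   Context: The extended Selberg class $\mathcal S^\sharp$ is the set of functions $F$, not identically zero, such that: (i) $F(s)=\sum_{n\ge1}a_n n^{-s}$, with the series converging absolutely for $\Re s>1$; (ii) $(s-1)^mF(s)$ extends to an entire function of finite order for some integer $m\ge0$; (iii) letting $m$ be the order of the pole of $F$ at $s=1$ ($m=0$ if there is no pole), there is a function $\gamma(s)=\alpha s^m(s-1)^mQ^s\prod_{i=1}^k\Gamma(\omega_i s+\mu_i)$ with $\alpha\in\mathbb C\setminus\{0\}$, $Q>0$, an integer $k\ge1$, $\omega_i>0$ and $\mu_i\in\mathbb C$ with $\Re\mu_i\ge0$, such that the (entire) function $\xi^F(s):=\gamma(s)F(s)$ satisfies $\xi^F(s)=\overline{\xi^F(1-\bar s)}$ for all $s$. For $t<0$, $F_t(s):=\sum_{n\ge1}\exp\!\left(-\frac{|t|}{4}\log^2 n\right)a_n n^{-s}$, which converges absolutely for every $s\in\mathbb C$. *)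

theory Defs
  imports "HOL-Analysis.Analysis"
begin

text \<open>Dirichlet series with coefficients a (the n = 0 term vanishes since 0 powr s = 0).\<close>
definition dir_series :: "(nat \<Rightarrow> complex) \<Rightarrow> complex \<Rightarrow> complex" where
  "dir_series a s = (\<Sum>n. a n * of_nat n powr (-s))"

text \<open>G is the entire continuation of (s-1)^m F(s); m is the order of the pole at 1
  (m = 0 or G 1 \<noteq> 0); Xi is the entire function gamma(s) F(s).\<close>
definition ext_selberg :: "(nat \<Rightarrow> complex) \<Rightarrow> bool" where
  "ext_selberg a \<longleftrightarrow>
     (\<exists>s. Re s > 1 \<and> dir_series a s \<noteq> 0) \<and>
     (\<forall>s. Re s > 1 \<longrightarrow> summable (\<lambda>n. norm (a n * of_nat n powr (-s)))) \<and>
     (\<exists>(m::nat) G. G holomorphic_on UNIV \<and>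
        (\<exists>\<rho> C. \<forall>s. norm (G s) \<le> C * exp (norm s powr \<rho>)) \<and>
        (\<forall>s. Re s > 1 \<longrightarrow> G s = (s - 1) ^ m * dir_series a s) \<and>
        (m = 0 \<or> G 1 \<noteq> 0) \<and>
        (\<exists>(\<alpha>::complex) (Q::real) (k::nat) (\<omega>::nat \<Rightarrow> real) (\<mu>::nat \<Rightarrow> complex) Xi.
           \<alpha> \<noteq> 0 \<and> Q > 0 \<and> k \<ge> 1 \<and>
           (\<forall>i<k. \<omega> i > 0 \<and> Re (\<mu> i) \<ge> 0) \<and>
           Xi holomorphic_on UNIV \<and>
           (\<forall>s. Re s > 1 \<longrightarrow>
              Xi s = \<alpha> * s ^ m * (s - 1) ^ m * of_real Q powr s *
                     (\<Prod>i<k. Gamma (of_real (\<omega> i) * s + \<mu> i)) * dir_series a s) \<and>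
           (\<forall>s. Xi s = cnj (Xi (1 - cnj s)))))"

definition deformed :: "(nat \<Rightarrow> complex) \<Rightarrow> real \<Rightarrow> complex \<Rightarrow> complex" where
  "deformed a t s = (\<Sum>n. of_real (exp (- (\<bar>t\<bar> / 4) * (ln (real n))\<^sup>2)) * a n * of_nat n powr (-s))"

end

theory Submission
  imports Defs "HOL-Complex_Analysis.Complex_Analysis"
begin

text \<open>Absolute convergence at \<open>s = 2\<close> bounds the coefficients polynomially, so the Gaussian
  damping makes \<open>F\<^sub>t\<close> entire of order at most two and bounded on \<open>Re s \<ge> 0\<close>. A zero-free
  entire function of that kind is \<open>exp\<close> of a quadratic polynomial (Borel--Carath\'eodory and
  Liouville), and boundedness on the right half-plane cuts it down to \<open>exp (c + u s)\<close> with
  \<open>u\<close> real. Letting \<open>s \<rightarrow> +\<infinity>\<close> along the reals and comparing with the Dirichlet expansion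
  leaves a single coefficient, so \<open>F\<close> would be a monomial \<open>a n\<^sub>0 n\<^sub>0\<^sup>-\<^sup>s\<close>. But then
  \<open>F = \<xi>/\<gamma>\<close> has no zeros, whereas it must vanish at the poles of the gamma factor.\<close>

section \<open>Zero-free entire functions of order two\<close>

lemma norm_less_norm_reflect:
  fixes w :: complex
  assumes "M > 0" "Re w < M"
  shows "norm w < norm (of_real (2 * M) - w)"
proof -
  have "(Re w)\<^sup>2 < (2 * M - Re w)\<^sup>2"
  proof -
    have "(2 * M - Re w)\<^sup>2 - (Re w)\<^sup>2 = 4 * M * (M - Re w)"
      by (simp add: power2_eq_square algebra_simps)
    then show ?thesis
      using assms by (smt (verit) mult_pos_pos)
  qed
  then have "(norm w)\<^sup>2 < (norm (of_real (2 * M) - w))\<^sup>2"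
    by (simp add: cmod_power2)
  then show ?thesis
    by (rule power_less_imp_less_base) simp
qed

text \<open>Borel--Carath\'eodory on the unit disc: \<open>h = w / (2M - w)\<close> maps the disc into itself,
  so Schwarz's lemma applies to it.\<close>
lemma borel_caratheodory_disc:
  fixes w :: "complex \<Rightarrow> complex"
  assumes holo: "w holomorphic_on ball 0 1" and w0: "w 0 = 0"
      and re: "\<And>v. norm v < 1 \<Longrightarrow> Re (w v) < M"
      and u: "norm u < 1"
  shows "norm (w u) \<le> 2 * M * norm u / (1 - norm u)"
proof -
  have M: "M > 0"
    using re[of 0] w0 by simp
  define h where "h v = w v / (of_real (2 * M) - w v)" for v
  have den: "of_real (2 * M) - w v \<noteq> 0" if "norm v < 1" for v
    using re[OF that] M by (auto simp: complex_eq_iff)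
  have "h holomorphic_on ball 0 1"
    unfolding h_def using den by (intro holomorphic_intros holo) auto
  moreover have "norm (h v) < 1" if "norm v < 1" for v
    using norm_less_norm_reflect[OF M re[OF that]] den[OF that]
    by (simp add: h_def norm_divide divide_less_eq)
  ultimately have hu: "norm (h u) \<le> norm u"
    using Schwarz_Lemma(1)[of h u] u w0 by (simp add: h_def)
  have "w u * (1 + h u) = of_real (2 * M) * h u"
    using den[OF u] by (simp add: h_def field_simps)
  then have "norm (w u) * norm (1 + h u) = 2 * M * norm (h u)"
    using M by (metis norm_mult norm_of_real abs_of_pos mult_pos_pos zero_less_numeral)
  moreover have "1 - norm u \<le> norm (1 + h u)"
    using norm_triangle_ineq4[of "1 + h u" "h u"] hu by simp
  ultimately have "norm (w u) * (1 - norm u) \<le> 2 * M * norm u"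
    using hu M by (smt (verit, best) mult_left_mono norm_ge_zero)
  then show ?thesis
    using u by (simp add: field_simps)
qed

lemma borel_caratheodory_entire:
  fixes g :: "complex \<Rightarrow> complex"
  assumes holo: "g holomorphic_on UNIV" and B: "B \<ge> 0"
      and re: "\<And>z. Re (g z) \<le> A + B * (norm z)\<^sup>2"
  shows "norm (g z - g 0) \<le> 2 * (\<bar>A - Re (g 0)\<bar> + 1 + B * (2 * norm z + 1)\<^sup>2)"
proof -
  define R where "R = 2 * norm z + 1"
  define M where "M = \<bar>A - Re (g 0)\<bar> + 1 + B * R\<^sup>2"
  define w where "w v = g (of_real R * v) - g 0" for v
  have R: "R > 0" unfolding R_def by (simp add: add_nonneg_pos)
  have "w holomorphic_on ball 0 1"
    unfolding w_def by (intro holomorphic_intros holomorphic_on_compose_gen[OF _ holo, unfolded o_def]) auto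
  moreover have "Re (w v) < M" if "norm v < 1" for v
  proof -
    have "B * (norm (of_real R * v))\<^sup>2 \<le> B * R\<^sup>2"
      using that R B by (intro mult_left_mono power_mono) (auto simp: norm_mult)
    then show ?thesis
      using re[of "of_real R * v"] by (simp add: w_def M_def)
  qed
  moreover have "norm (z / of_real R) = norm z / R"
    using R by (simp add: norm_divide)
  moreover have "norm z / R < 1"
    using R by (simp add: R_def)
  ultimately have "norm (w (z / of_real R)) \<le> 2 * M * (norm z / R) / (1 - norm z / R)"
    using borel_caratheodory_disc[of w M "z / of_real R"] by (simp add: w_def)
  moreover have "2 * M * (norm z / R) / (1 - norm z / R) \<le> 2 * M"
  proof -
    have "norm z / R \<le> 1 - norm z / R"
      using R by (simp add: R_def field_simps)
    then have "norm z / R / (1 - norm z / R) \<le> 1"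
      using \<open>norm z / R < 1\<close> by (subst divide_le_eq_1) auto
    moreover have "M \<ge> 0"
      unfolding M_def using B by simp
    ultimately show ?thesis
      using mult_left_mono[of "norm z / R / (1 - norm z / R)" 1 "2 * M"] by (simp add: mult.assoc)
  qed
  moreover have "w (z / of_real R) = g z - g 0"
    using R by (simp add: w_def)
  ultimately show ?thesis
    by (simp add: M_def R_def)
qed

lemma entire_Re_le_quadratic_imp_quadratic:
  fixes g :: "complex \<Rightarrow> complex"
  assumes holo: "g holomorphic_on UNIV" and B: "B \<ge> 0"
      and re: "\<And>z. Re (g z) \<le> A + B * (norm z)\<^sup>2"
  obtains c0 c1 c2 where "\<And>z. g z = c0 + c1 * z + c2 * z\<^sup>2"
proof -
  define D where "D = \<bar>A - Re (g 0)\<bar> + 1"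
  have "norm (g z) \<le> (norm (g 0) + 2 * D + 18 * B) * norm z ^ 2" if z: "1 \<le> norm z" for z
  proof -
    have z2: "1 \<le> (norm z)\<^sup>2"
      using z by (simp add: one_le_power)
    have "(2 * norm z + 1)\<^sup>2 \<le> 9 * (norm z)\<^sup>2"
      using power_mono[of "2 * norm z + 1" "3 * norm z" 2] z by (simp add: power_mult_distrib)
    then have "B * (2 * norm z + 1)\<^sup>2 \<le> B * (9 * (norm z)\<^sup>2)"
      by (rule mult_left_mono[OF _ B])
    moreover have "norm (g 0) \<le> norm (g 0) * (norm z)\<^sup>2" "D \<le> D * (norm z)\<^sup>2"
      using z2 by (simp_all add: D_def mult_le_cancel_left1)
    moreover have "norm (g z) \<le> norm (g 0) + 2 * (D + B * (2 * norm z + 1)\<^sup>2)"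
      using norm_triangle_ineq2[of "g z" "g 0"] borel_caratheodory_entire[OF holo B re, of z]
      by (simp add: D_def)
    ultimately show ?thesis
      by (simp add: algebra_simps)
  qed
  then have "g z = (\<Sum>k\<le>2. (deriv ^^ k) g 0 / fact k * z ^ k)" for z
    by (rule Liouville_polynomial[OF holo])
  moreover have "(\<Sum>k\<le>2. f k) = f 0 + f 1 + f 2" for f :: "nat \<Rightarrow> complex"
    by (simp add: numeral_2_eq_2)
  ultimately show ?thesis
    by (intro that[of "(deriv ^^ 0) g 0 / fact 0" "(deriv ^^ 1) g 0 / fact 1" "(deriv ^^ 2) g 0 / fact 2"])
       (simp only: power_0 power_one_right mult_1_right)
qed

lemma real_quadratic_bounded_above:
  fixes p u c D :: real
  assumes bounded: "\<And>x. x \<ge> 0 \<Longrightarrow> p * x\<^sup>2 + u * x + c \<le> D"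
  shows "p \<le> 0" and "p = 0 \<Longrightarrow> u \<le> 0"
proof -
  show "p \<le> 0"
  proof (rule ccontr)
    assume "\<not> p \<le> 0"
    then have p: "p > 0" by simp
    define x where "x = (\<bar>u\<bar> + \<bar>D - c\<bar> + 1) / p + 1"
    have x: "x \<ge> 1" "p * x \<ge> \<bar>u\<bar> + \<bar>D - c\<bar> + 1"
      using p by (auto simp: x_def field_simps)
    then have "p * x\<^sup>2 \<ge> (\<bar>u\<bar> + \<bar>D - c\<bar> + 1) * x"
      by (simp add: power2_eq_square mult.assoc[symmetric] mult_right_mono)
    moreover have "\<bar>u\<bar> * x \<ge> - (u * x)"
      using x(1) by (simp add: abs_if)
    moreover have "(\<bar>D - c\<bar> + 1) * x \<ge> \<bar>D - c\<bar> + 1"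
      using mult_left_mono[OF x(1), of "\<bar>D - c\<bar> + 1"] by simp
    moreover have "(\<bar>u\<bar> + \<bar>D - c\<bar> + 1) * x = \<bar>u\<bar> * x + (\<bar>D - c\<bar> + 1) * x"
      by (simp add: algebra_simps)
    ultimately show False
      using bounded[of x] x(1) by linarith
  qed
  assume p0: "p = 0"
  show "u \<le> 0"
  proof (rule ccontr)
    assume "\<not> u \<le> 0"
    then have "u * ((\<bar>D - c\<bar> + 1) / u) = \<bar>D - c\<bar> + 1" "(\<bar>D - c\<bar> + 1) / u \<ge> 0"
      by simp_all
    then have "\<bar>D - c\<bar> + 1 + c \<le> D"
      using bounded[of "(\<bar>D - c\<bar> + 1) / u"] p0 by simp
    then show False
      using abs_ge_self[of "D - c"] by linarith
  qed
qed

lemma quadratic_Re_bounded_on_right_halfplane: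
  fixes c0 c1 c2 :: complex
  assumes bounded: "\<And>z. Re z \<ge> 0 \<Longrightarrow> Re (c0 + c1 * z + c2 * z\<^sup>2) \<le> D"
  shows "c2 = 0" and "Im c1 = 0"
proof -
  have Re_at: "Re (c0 + c1 * Complex \<sigma> \<tau> + c2 * (Complex \<sigma> \<tau>)\<^sup>2)
      = Re c0 + Re c1 * \<sigma> - Im c1 * \<tau> + Re c2 * (\<sigma>\<^sup>2 - \<tau>\<^sup>2) - Im c2 * (2 * \<sigma> * \<tau>)" for \<sigma> \<tau>
    by (simp add: power2_eq_square algebra_simps)
  have real_axis: "Re c2 * x\<^sup>2 + Re c1 * x + Re c0 \<le> D" if "x \<ge> 0" for x
    using bounded[of "Complex x 0"] Re_at[of x 0] that by (simp add: algebra_simps)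
  have imag_axis: "(- Re c2) * x\<^sup>2 + (\<epsilon> * Im c1) * x + Re c0 \<le> D"
    if "x \<ge> 0" "\<epsilon> \<in> {-1, 1}" for x \<epsilon>
    using bounded[of "Complex 0 (- \<epsilon> * x)"] Re_at[of 0 "- \<epsilon> * x"] that
    by (auto simp: algebra_simps power2_eq_square)
  have shifted: "(- Re c2) * x\<^sup>2 + (\<epsilon> * (Im c1 + 2 * Im c2)) * x + (Re c0 + Re c1 + Re c2) \<le> D"
    if "x \<ge> 0" "\<epsilon> \<in> {-1, 1}" for x \<epsilon>
    using bounded[of "Complex 1 (- \<epsilon> * x)"] Re_at[of 1 "- \<epsilon> * x"] that
    by (auto simp: algebra_simps power2_eq_square)
  have "Re c2 \<le> 0"
    by (rule real_quadratic_bounded_above(1)[OF real_axis])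
  moreover have "- Re c2 \<le> 0"
    by (rule real_quadratic_bounded_above(1)[of _ "Im c1" "Re c0" D]) (use imag_axis[of _ 1] in simp)
  ultimately have Re_c2: "- Re c2 = 0" by simp
  have imag_slope: "\<epsilon> * Im c1 \<le> 0" if "\<epsilon> \<in> {-1, 1}" for \<epsilon>
    by (rule real_quadratic_bounded_above(2)[OF imag_axis[OF _ that] Re_c2])
  have shifted_slope: "\<epsilon> * (Im c1 + 2 * Im c2) \<le> 0" if "\<epsilon> \<in> {-1, 1}" for \<epsilon>
    by (rule real_quadratic_bounded_above(2)[OF shifted[OF _ that] Re_c2])
  show "Im c1 = 0"
    using imag_slope[of 1] imag_slope[of "-1"] by simp
  then have "Im c2 = 0"
    using shifted_slope[of 1] shifted_slope[of "-1"] by simp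
  with Re_c2 show "c2 = 0"
    by (cases c2) (simp add: complex_eq_iff)
qed

lemma zero_free_entire_exp_affine:
  fixes F :: "complex \<Rightarrow> complex"
  assumes holo: "F holomorphic_on UNIV" and nz: "\<And>z. F z \<noteq> 0"
      and growth: "\<And>z. norm (F z) \<le> exp (A + B * (norm z)\<^sup>2)"
      and bounded: "\<And>z. Re z \<ge> 0 \<Longrightarrow> norm (F z) \<le> M"
  obtains c u where "\<And>z. F z = exp (c + of_real u * z)"
proof -
  obtain g where g: "g holomorphic_on UNIV" "\<And>z. z \<in> UNIV \<Longrightarrow> F z = exp (g z)"
    using contractible_imp_holomorphic_log[OF holo contractible_UNIV nz] by blast
  have norm_F: "norm (F z) = exp (Re (g z))" for z
    by (simp add: g(2))
  have "Re (g z) \<le> A + max B 0 * (norm z)\<^sup>2" for z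
    using growth[of z] mult_right_mono[of B "max B 0" "(norm z)\<^sup>2"] by (simp add: norm_F)
  then obtain c0 c1 c2 where g_eq: "\<And>z. g z = c0 + c1 * z + c2 * z\<^sup>2"
    using entire_Re_le_quadratic_imp_quadratic[OF g(1)] by (metis max.cobounded2)
  have "0 < norm (F 0)"
    using nz[of 0] by simp
  then have "M > 0"
    using order.strict_trans2[OF _ bounded[of 0]] by simp
  have "Re (c0 + c1 * z + c2 * z\<^sup>2) \<le> ln M" if "Re z \<ge> 0" for z
  proof -
    have "exp (Re (g z)) \<le> M"
      using bounded[OF that] by (simp only: norm_F)
    then show ?thesis
      using \<open>M > 0\<close> by (simp add: ln_ge_iff flip: g_eq)
  qed
  note coeffs = quadratic_Re_bounded_on_right_halfplane[OF this]
  have "c1 = of_real (Re c1)"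
    using coeffs(2) by (simp add: complex_eq_iff)
  then have "F z = exp (c0 + of_real (Re c1) * z)" for z
    using coeffs(1) by (simp add: g(2) g_eq)
  then show ?thesis
    by (rule that)
qed

section \<open>Dirichlet series on the real axis\<close>

lemma norm_of_nat_powr: "norm (of_nat n powr (s::complex)) = real n powr Re s"
  using norm_powr_real_powr[of "of_nat n" s] by simp

lemma of_nat_powr_of_real: "of_nat k powr (complex_of_real x) = complex_of_real (real k powr x)"
  using powr_of_real[of "real k" x] by simp

lemma dirichlet_coeff_bound:
  fixes a :: "nat \<Rightarrow> complex" and \<sigma> :: real
  assumes "summable (\<lambda>n. norm (a n * of_nat n powr (- of_real \<sigma>)))"
  obtains C where "\<And>n. n \<ge> 1 \<Longrightarrow> norm (a n) \<le> C * real n powr \<sigma>"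
proof
  fix n :: nat assume n: "n \<ge> 1"
  let ?f = "\<lambda>n. norm (a n * of_nat n powr (- of_real \<sigma>))"
  have "?f n \<le> suminf ?f"
    using sum_le_suminf[OF assms, of "{n}"] by auto
  moreover have "?f n = norm (a n) / real n powr \<sigma>"
  proof -
    have pw: "of_nat n powr (- of_real \<sigma>) = (of_real (real n powr (-\<sigma>)) :: complex)"
      using of_nat_powr_of_real[of n "-\<sigma>"] by simp
    then show ?thesis
      unfolding norm_mult pw norm_of_real by (simp add: powr_minus divide_inverse)
  qed
  ultimately show "norm (a n) \<le> suminf ?f * real n powr \<sigma>"
    using n by (simp add: divide_le_eq)
qed

lemma norm_dirichlet_term_le:
  assumes "x \<ge> 0"
  shows "norm (b n * of_nat n powr (- complex_of_real x)) \<le> norm (b n)"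
proof (cases "n = 0")
  case False
  have "real n powr (-x) \<le> 1"
    using powr_mono2'[of "-x" 1 "real n"] False assms by simp
  then show ?thesis
    by (simp add: norm_mult norm_of_nat_powr mult_left_le)
qed simp

lemma summable_dirichlet_nonneg:
  fixes b :: "nat \<Rightarrow> complex"
  assumes "summable (\<lambda>n. norm (b n))" and "x \<ge> 0"
  shows "summable (\<lambda>n. b n * of_nat n powr (- complex_of_real x))"
  by (rule summable_norm_cancel, rule summable_comparison_test[OF _ assms(1)])
     (use norm_dirichlet_term_le[OF assms(2)] in auto)

lemma powr_tendsto_zero:
  fixes r :: real assumes "0 < r" "r < 1"
  shows "((\<lambda>x. r powr x) \<longlongrightarrow> 0) at_top"
proof -
  have "LIM x at_top. ln r * x :> at_bot"
    using assms by (intro filterlim_tendsto_neg_mult_at_bot[OF tendsto_const] filterlim_ident) simp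
  then have "((\<lambda>x. exp (ln r * x)) \<longlongrightarrow> 0) at_top"
    by (rule filterlim_compose[OF exp_at_bot])
  then show ?thesis
    using assms by (simp add: powr_def mult.commute)
qed

lemma ratio_powr_tendsto:
  assumes "1 \<le> m" and "m \<le> k \<or> k = 0"
  shows "((\<lambda>x. (real m / real k) powr x) \<longlongrightarrow> (if k = m then 1 else 0)) at_top"
proof -
  consider "k = 0" | "k = m" | "m < k"
    using assms by linarith
  then show ?thesis
  proof cases
    case 3
    then have "0 < real m / real k" "real m / real k < 1"
      using assms(1) by auto
    then show ?thesis
      using 3 powr_tendsto_zero by simp
  qed (use assms in \<open>simp_all add: tendsto_const\<close>)
qed

lemma powr_times_of_nat_powr:
  "of_real (real m powr x) * of_nat k powr (- complex_of_real x)
     = complex_of_real ((real m / real k) powr x)"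
proof (cases "k = 0")
  case False
  have "of_nat k powr (- complex_of_real x) = of_real (real k powr (-x))"
    using of_nat_powr_of_real[of k "-x"] by simp
  moreover have "(real m / real k) powr x = real m powr x / real k powr x"
    by (simp add: powr_divide)
  ultimately show ?thesis
    by (simp add: powr_minus divide_inverse flip: of_real_mult of_real_inverse)
qed simp

text \<open>The leading coefficient of a Dirichlet series is recovered from its values on the real axis
  by dominated convergence (Tannery's theorem).\<close>
lemma dirichlet_leading_term_tendsto:
  fixes b :: "nat \<Rightarrow> complex"
  assumes sb: "summable (\<lambda>n. norm (b n))" and n0: "n0 \<ge> 1"
      and below: "\<And>n. 1 \<le> n \<Longrightarrow> n < n0 \<Longrightarrow> b n = 0"
  shows "((\<lambda>x. of_real (real n0 powr x) * (\<Sum>n. b n * of_nat n powr (- of_real x))) \<longlongrightarrow> b n0) at_top"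
proof -
  define f where "f = (\<lambda>k x. b k * of_real ((real n0 / real k) powr x))"
  have lim: "(f k \<longlongrightarrow> (if k = n0 then b n0 else 0)) at_top" for k
  proof (cases "1 \<le> k \<and> k < n0")
    case True
    then show ?thesis
      using below by (simp add: f_def tendsto_const)
  next
    case False
    then have "((\<lambda>x. b k * of_real ((real n0 / real k) powr x))
        \<longlongrightarrow> b k * of_real (if k = n0 then 1 else 0)) at_top"
      using n0 by (intro tendsto_intros ratio_powr_tendsto) auto
    then show ?thesis
      by (simp add: f_def split: if_splits)
  qed
  have "norm (f k x) \<le> norm (b k)" if "x \<ge> 0" for k x
  proof (cases "k < n0")
    case False
    then have "(real n0 / real k) powr x \<le> 1 powr x"
      using n0 that by (intro powr_mono2) (auto simp: divide_le_eq_1)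
    then show ?thesis by (simp add: f_def norm_mult mult_left_le)
  qed (use below in \<open>cases "k = 0", simp_all add: f_def\<close>)
  then have bound: "eventually (\<lambda>(k,x). norm (f k x) \<le> norm (b k)) (at_top \<times>\<^sub>F at_top)"
    unfolding eventually_prod_filter by (intro exI[of _ "\<lambda>_. True"] exI[of _ "\<lambda>x. x \<ge> 0"]) auto
  have "((\<lambda>x. \<Sum>k. f k x) \<longlongrightarrow> (\<Sum>k. if k = n0 then b n0 else 0)) at_top"
    using tannerys_theorem[OF lim bound sb] by simp
  moreover have "eventually (\<lambda>x. (\<Sum>k. f k x)
      = of_real (real n0 powr x) * (\<Sum>n. b n * of_nat n powr (- of_real x))) at_top"
    using eventually_ge_at_top[of "0::real"]
  proof eventually_elim
    case (elim x)
    show ?case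
      using suminf_mult[OF summable_dirichlet_nonneg[OF sb elim], of "of_real (real n0 powr x)"]
      by (simp add: f_def ac_simps flip: powr_times_of_nat_powr)
  qed
  ultimately show ?thesis
    using tendsto_cong sums_unique[OF sums_single[of n0 "\<lambda>_. b n0"]] by fastforce
qed

lemma least_nonzero_coeff:
  fixes b :: "nat \<Rightarrow> complex"
  assumes "n \<ge> 1" "b n \<noteq> 0"
  obtains n0 where "n0 \<ge> 1" "b n0 \<noteq> 0" "\<And>n. 1 \<le> n \<Longrightarrow> n < n0 \<Longrightarrow> b n = 0"
proof
  let ?P = "\<lambda>n. 1 \<le> n \<and> b n \<noteq> 0"
  show "1 \<le> Least ?P" "b (Least ?P) \<noteq> 0"
    using LeastI[of ?P n] assms by auto
  show "b m = 0" if "1 \<le> m" "m < Least ?P" for m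
    using not_less_Least[of m ?P] that by blast
qed

lemma dirichlet_series_eventually_zero_imp_coeff_zero:
  fixes b :: "nat \<Rightarrow> complex"
  assumes sb: "summable (\<lambda>n. norm (b n))"
      and zero: "eventually (\<lambda>x. (\<Sum>n. b n * of_nat n powr (- of_real x)) = 0) at_top"
      and n: "n \<ge> 1"
  shows "b n = 0"
proof (rule ccontr)
  assume "b n \<noteq> 0"
  then obtain n0 where n0: "n0 \<ge> 1" "b n0 \<noteq> 0" and below: "\<And>n. 1 \<le> n \<Longrightarrow> n < n0 \<Longrightarrow> b n = 0"
    using least_nonzero_coeff n by blast
  have "((\<lambda>x. of_real (real n0 powr x) * (\<Sum>n. b n * of_nat n powr (- of_real x))) \<longlongrightarrow> b n0) at_top"
    by (rule dirichlet_leading_term_tendsto[OF sb n0(1) below])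
  moreover have "((\<lambda>x. of_real (real n0 powr x) * (\<Sum>n. b n * of_nat n powr (- of_real x))) \<longlongrightarrow> 0) at_top"
    by (rule tendsto_eventually) (use zero in \<open>eventually_elim, simp\<close>)
  ultimately have "b n0 = 0"
    by (rule tendsto_unique[rotated]) simp
  with n0(2) show False ..
qed

lemma tendsto_scaled_exp_nonzero_imp_const:
  fixes c L :: complex and e :: real
  assumes lim: "((\<lambda>x. c * of_real (exp (e * x))) \<longlongrightarrow> L) at_top" and "L \<noteq> 0"
  shows "e = 0" and "c = L"
proof -
  have "filterlim (\<lambda>x. x + 1) at_top (at_top :: real filter)"
    using filterlim_tendsto_add_at_top[OF tendsto_const filterlim_ident, of 1] by (simp add: add.commute)
  from filterlim_compose[OF lim this]
  have "((\<lambda>x. of_real (exp e) * (c * of_real (exp (e * x)))) \<longlongrightarrow> L) at_top"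
    by (simp add: distrib_left exp_add ac_simps)
  moreover have "((\<lambda>x. of_real (exp e) * (c * of_real (exp (e * x)))) \<longlongrightarrow> of_real (exp e) * L) at_top"
    by (intro tendsto_mult tendsto_const lim)
  ultimately have "L = of_real (exp e) * L"
    by (rule tendsto_unique[rotated]) simp
  then show e: "e = 0"
    using \<open>L \<noteq> 0\<close> by simp
  show "c = L"
    by (rule tendsto_unique[OF _ tendsto_const]) (use lim e in simp_all)
qed

lemma dirichlet_series_eq_monomial_imp_coeff_zero:
  fixes b :: "nat \<Rightarrow> complex" and \<beta> :: complex
  assumes sb: "summable (\<lambda>n. norm (b n))" and n0: "n0 \<ge> 1"
      and eq: "\<And>x. x \<ge> 0 \<Longrightarrow> (\<Sum>n. b n * of_nat n powr (- of_real x)) = \<beta> * of_nat n0 powr (- of_real x)"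
      and n: "n \<ge> 1" "n \<noteq> n0"
  shows "b n = 0"
proof -
  define b' where "b' k = b k - (if k = n0 then \<beta> else 0)" for k
  have single: "summable (\<lambda>k. norm (if k = n0 then \<beta> else 0))"
    by (rule summable_finite[of "{n0}"]) auto
  have "summable (\<lambda>k. norm (b' k))"
    unfolding b'_def by (rule summable_comparison_test[OF _ summable_add[OF sb single]]) (auto intro: norm_triangle_ineq4)
  moreover have b'_zero: "(\<Sum>k. b' k * of_nat k powr (- of_real x)) = 0" if x: "x \<ge> 0" for x
  proof -
    have "(\<lambda>k. b k * of_nat k powr (- of_real x) - (if k = n0 then \<beta> * of_nat n0 powr (- of_real x) else 0))
        sums ((\<Sum>k. b k * of_nat k powr (- of_real x)) - \<beta> * of_nat n0 powr (- of_real x))"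
      by (intro sums_diff summable_sums summable_dirichlet_nonneg[OF sb x] sums_single)
    moreover have "(\<lambda>k. b' k * of_nat k powr (- of_real x))
        = (\<lambda>k. b k * of_nat k powr (- of_real x) - (if k = n0 then \<beta> * of_nat n0 powr (- of_real x) else 0))"
      by (simp add: b'_def fun_eq_iff left_diff_distrib)
    ultimately show ?thesis
      using eq[OF x] by (metis sums_unique diff_self)
  qed
  moreover have "eventually (\<lambda>x. (\<Sum>k. b' k * of_nat k powr (- of_real x)) = 0) at_top"
    using eventually_ge_at_top[of "0::real"] by eventually_elim (rule b'_zero)
  ultimately have "b' n = 0"
    using dirichlet_series_eventually_zero_imp_coeff_zero n(1) by blast
  then show ?thesis
    using n(2) by (simp add: b'_def)
qed

text \<open>Comparing leading terms, an exponential on the real axis can only be a single Dirichlet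
  monomial \<open>b n\<^sub>0 n\<^sub>0\<^sup>-\<^sup>x\<close>.\<close>
lemma dirichlet_series_eq_exp_imp_monomial:
  fixes b :: "nat \<Rightarrow> complex" and c :: complex and u :: real
  assumes sb: "summable (\<lambda>n. norm (b n))"
      and eq: "\<And>x. x \<ge> 0 \<Longrightarrow> (\<Sum>n. b n * of_nat n powr (- of_real x)) = c * of_real (exp (u * x))"
  obtains n0 where "n0 \<ge> 1" "\<And>n. n \<ge> 1 \<Longrightarrow> n \<noteq> n0 \<Longrightarrow> b n = 0"
proof (cases "\<exists>n\<ge>1. b n \<noteq> 0")
  case False
  then show ?thesis using that[of 1] by auto
next
  case True
  then obtain n0 where n0: "n0 \<ge> 1" "b n0 \<noteq> 0" and below: "\<And>n. 1 \<le> n \<Longrightarrow> n < n0 \<Longrightarrow> b n = 0"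
    using least_nonzero_coeff by blast
  have "eventually (\<lambda>x. of_real (real n0 powr x) * (\<Sum>n. b n * of_nat n powr (- of_real x))
          = c * of_real (exp ((u + ln (real n0)) * x))) at_top"
    using eventually_ge_at_top[of "0::real"]
  proof eventually_elim
    case (elim x)
    have "real n0 powr x * exp (u * x) = exp ((u + ln (real n0)) * x)"
      using n0(1) by (simp add: powr_def exp_add[symmetric] algebra_simps)
    then show ?case
      by (simp add: eq[OF elim] flip: of_real_mult)
  qed
  from tendsto_cong[OF this] dirichlet_leading_term_tendsto[OF sb n0(1) below]
  have lim: "((\<lambda>x. c * of_real (exp ((u + ln (real n0)) * x))) \<longlongrightarrow> b n0) at_top"
    by simp
  have u: "u = - ln (real n0)" and c: "c = b n0"
    using tendsto_scaled_exp_nonzero_imp_const[OF lim n0(2)] by auto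
  have "(\<Sum>n. b n * of_nat n powr (- of_real x)) = b n0 * of_nat n0 powr (- of_real x)" if "x \<ge> 0" for x
  proof -
    have "exp (u * x) = real n0 powr (-x)"
      using n0(1) by (simp add: u powr_def)
    moreover have "of_nat n0 powr (- of_real x) = (of_real (real n0 powr (-x)) :: complex)"
      using of_nat_powr_of_real[of n0 "-x"] by simp
    ultimately show ?thesis
      unfolding eq[OF that] c by simp
  qed
  then show ?thesis
    using that[OF n0(1)] dirichlet_series_eq_monomial_imp_coeff_zero[OF sb n0(1)] by blast
qed

section \<open>Gaussian damping\<close>

lemma summable_exp_neg_ln_squared:
  fixes T :: real assumes T: "T > 0"
  shows "summable (\<lambda>n. exp (- T * (ln (real n))\<^sup>2))"
proof (rule summable_comparison_test_ev)
  show "summable (\<lambda>n. inverse (real n ^ 2))"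
    by (rule inverse_power_summable) simp
  have "eventually (\<lambda>n. real n \<ge> exp (2 / T)) at_top"
    using filterlim_real_sequentially unfolding filterlim_at_top by blast
  then show "eventually (\<lambda>n. norm (exp (- T * (ln (real n))\<^sup>2)) \<le> inverse (real n ^ 2)) at_top"
  proof eventually_elim
    case (elim n)
    have n: "real n > 0" using elim by (metis exp_gt_zero less_le_trans)
    then have L: "ln (real n) \<ge> 2 / T"
      using elim by (subst ln_ge_iff) auto
    then have "T * ln (real n) * ln (real n) \<ge> 2 * ln (real n)"
      using T n by (intro mult_right_mono) (auto simp: field_simps)
    then have "T * (ln (real n))\<^sup>2 \<ge> 2 * ln (real n)"
      by (simp add: power2_eq_square mult.assoc)
    then have "exp (- T * (ln (real n))\<^sup>2) \<le> exp (- 2 * ln (real n))"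
      by simp
    also have "exp (- 2 * ln (real n)) = real n powr (- 2)"
      using n by (simp add: powr_def mult.commute)
    also have "\<dots> = inverse (real n ^ 2)"
      using n by (simp add: powr_minus powr_realpow)
    finally show ?case by simp
  qed
qed

text \<open>Completing the square: the Gaussian weight \<open>exp(-T ln\<^sup>2 n)\<close> absorbs any power of \<open>n\<close>,
  at the price of half of itself.\<close>
lemma gaussian_weight_absorbs_power:
  fixes T K C x y :: real
  assumes T: "T > 0" and n: "n \<ge> 1" and y: "0 \<le> y" "y \<le> C * real n powr K"
  shows "exp (- T * (ln (real n))\<^sup>2) * y * real n powr x
           \<le> C * exp ((x + K)\<^sup>2 / (2 * T)) * exp (- (T / 2) * (ln (real n))\<^sup>2)"
proof -
  define L where "L = ln (real n)"
  have pw: "real n powr z = exp (z * L)" for z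
    using n by (simp add: L_def powr_def)
  have "0 \<le> C * exp (K * L)"
    using order_trans[OF y] pw[of K] by simp
  then have C: "C \<ge> 0"
    by (simp add: zero_le_mult_iff)
  have square: "- T * L\<^sup>2 + (x + K) * L \<le> (x + K)\<^sup>2 / (2 * T) - (T / 2) * L\<^sup>2"
  proof -
    have "(x + K)\<^sup>2 / (2 * T) - (T / 2) * L\<^sup>2 - (- T * L\<^sup>2 + (x + K) * L) = (T * L - (x + K))\<^sup>2 / (2 * T)"
      using T by (simp add: field_simps power2_eq_square)
    moreover have "(T * L - (x + K))\<^sup>2 / (2 * T) \<ge> 0"
      using T by simp
    ultimately show ?thesis by linarith
  qed
  have "exp (- T * L\<^sup>2) * y * real n powr x \<le> exp (- T * L\<^sup>2) * (C * real n powr K) * real n powr x"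
    using y by (intro mult_right_mono mult_left_mono) auto
  also have "\<dots> = C * exp (- T * L\<^sup>2 + (x + K) * L)"
    by (simp add: pw exp_add[symmetric] algebra_simps)
  also have "\<dots> \<le> C * exp ((x + K)\<^sup>2 / (2 * T) - (T / 2) * L\<^sup>2)"
    using square C by (intro mult_left_mono) auto
  also have "\<dots> = C * exp ((x + K)\<^sup>2 / (2 * T)) * exp (- (T / 2) * L\<^sup>2)"
    by (simp only: diff_conv_add_uminus exp_add mult_minus_left mult.assoc)
  finally show ?thesis unfolding L_def .
qed

definition damped_term :: "real \<Rightarrow> (nat \<Rightarrow> complex) \<Rightarrow> nat \<Rightarrow> complex \<Rightarrow> complex" where
  "damped_term T a n s = of_real (exp (- T * (ln (real n))\<^sup>2)) * a n * of_nat n powr (-s)"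

definition damped_majorant :: "real \<Rightarrow> (nat \<Rightarrow> complex) \<Rightarrow> real \<Rightarrow> real" where
  "damped_majorant T a \<sigma> = (\<Sum>n. exp (- T * (ln (real n))\<^sup>2) * norm (a n) * real n powr (-\<sigma>))"

lemma norm_damped_term:
  "norm (damped_term T a n s) = exp (- T * (ln (real n))\<^sup>2) * norm (a n) * real n powr (- Re s)"
  by (simp add: damped_term_def norm_mult norm_of_nat_powr)

lemma holomorphic_damped_term: "damped_term T a n holomorphic_on UNIV"
  unfolding damped_term_def
  by (intro holomorphic_intros holomorphic_on_powr_right)

locale gaussian_damped_dirichlet =
  fixes T C K :: real and a :: "nat \<Rightarrow> complex"
  assumes T_pos: "T > 0"
      and coeff_bound: "\<And>n. n \<ge> 1 \<Longrightarrow> norm (a n) \<le> C * real n powr K"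
begin

definition gauss_mass :: real where
  "gauss_mass = (\<Sum>n. exp (- (T / 2) * (ln (real n))\<^sup>2))"

lemma summable_half_weight: "summable (\<lambda>n. exp (- (T / 2) * (ln (real n))\<^sup>2))"
  using summable_exp_neg_ln_squared[of "T / 2"] T_pos by simp

lemma gauss_mass_nonneg: "gauss_mass \<ge> 0"
  unfolding gauss_mass_def by (intro suminf_nonneg summable_half_weight) simp

lemma C_nonneg: "C \<ge> 0"
  using order_trans[OF norm_ge_zero coeff_bound[of 1]] by simp

lemma damped_weight_le:
  "exp (- T * (ln (real n))\<^sup>2) * norm (a n) * real n powr x
     \<le> C * exp ((x + K)\<^sup>2 / (2 * T)) * exp (- (T / 2) * (ln (real n))\<^sup>2)"
proof (cases "n = 0")
  case True
  then show ?thesis using C_nonneg by simp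
next
  case False
  then show ?thesis
    using gaussian_weight_absorbs_power[OF T_pos _ _ coeff_bound] by simp
qed

lemma summable_damped_weight:
  "summable (\<lambda>n. exp (- T * (ln (real n))\<^sup>2) * norm (a n) * real n powr x)"
  by (rule summable_comparison_test[OF _ summable_mult[OF summable_half_weight]])
     (use damped_weight_le in auto)

lemma damped_majorant_le: "damped_majorant T a \<sigma> \<le> C * exp ((K - \<sigma>)\<^sup>2 / (2 * T)) * gauss_mass"
proof -
  have "damped_majorant T a \<sigma> \<le> (\<Sum>n. C * exp ((- \<sigma> + K)\<^sup>2 / (2 * T)) * exp (- (T / 2) * (ln (real n))\<^sup>2))"
    unfolding damped_majorant_def
    by (intro suminf_le damped_weight_le summable_damped_weight summable_mult summable_half_weight)
  also have "\<dots> = C * exp ((K - \<sigma>)\<^sup>2 / (2 * T)) * gauss_mass"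
    unfolding gauss_mass_def suminf_mult[OF summable_half_weight] by (simp add: add.commute)
  finally show ?thesis .
qed

lemma summable_norm_damped_term: "summable (\<lambda>n. norm (damped_term T a n s))"
  unfolding norm_damped_term by (rule summable_damped_weight)

lemma norm_damped_series_le: "norm (\<Sum>n. damped_term T a n s) \<le> damped_majorant T a (Re s)"
  using summable_norm[OF summable_norm_damped_term] by (simp add: norm_damped_term damped_majorant_def)

lemma damped_majorant_antimono:
  assumes "\<sigma> \<ge> 0"
  shows "damped_majorant T a \<sigma> \<le> damped_majorant T a 0"
  unfolding damped_majorant_def
proof (intro suminf_le summable_damped_weight)
  show "exp (- T * (ln (real n))\<^sup>2) * norm (a n) * real n powr (- \<sigma>)
          \<le> exp (- T * (ln (real n))\<^sup>2) * norm (a n) * real n powr (- 0)" for n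
  proof (cases "n = 0")
    case False
    then have "real n powr (- \<sigma>) \<le> real n powr (- 0)"
      using assms by (intro powr_mono) auto
    then show ?thesis by (intro mult_left_mono) auto
  qed simp
qed

lemma norm_damped_series_le_exp_square:
  "norm (\<Sum>n. damped_term T a n z) \<le> exp (ln (C * gauss_mass + 1) + K\<^sup>2 / T + 1 / T * (norm z)\<^sup>2)"
proof -
  have CS: "C * gauss_mass \<ge> 0"
    using C_nonneg gauss_mass_nonneg by simp
  have "(K - Re z)\<^sup>2 \<le> 2 * K\<^sup>2 + 2 * (Re z)\<^sup>2"
    using zero_le_power2[of "K + Re z"] by (simp add: power2_eq_square algebra_simps)
  also have "\<dots> \<le> 2 * K\<^sup>2 + 2 * (norm z)\<^sup>2"
    using power_mono[OF abs_Re_le_cmod abs_ge_zero, of z 2] by simp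
  finally have "exp ((K - Re z)\<^sup>2 / (2 * T)) \<le> exp ((K\<^sup>2 + (norm z)\<^sup>2) / T)"
    using T_pos by (simp add: field_simps)
  then have "C * gauss_mass * exp ((K - Re z)\<^sup>2 / (2 * T)) \<le> (C * gauss_mass + 1) * exp ((K\<^sup>2 + (norm z)\<^sup>2) / T)"
    using CS by (intro mult_mono) auto
  also have "\<dots> = exp (ln (C * gauss_mass + 1) + (K\<^sup>2 + (norm z)\<^sup>2) / T)"
    using CS by (simp add: exp_add)
  finally show ?thesis
    using norm_damped_series_le[of z] damped_majorant_le[of "Re z"]
    by (simp add: ac_simps add_divide_distrib)
qed

lemma holomorphic_damped_series: "(\<lambda>s. \<Sum>n. damped_term T a n s) holomorphic_on UNIV"
proof -
  have "(\<lambda>s. \<Sum>n. damped_term T a n s) field_differentiable (at z)" for z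
  proof -
    define R where "R = norm z + 1"
    have deriv: "(damped_term T a n has_field_derivative deriv (damped_term T a n) w) (at w)" for n w
      using holomorphic_on_imp_differentiable_at[OF holomorphic_damped_term open_UNIV UNIV_I]
      by (simp add: DERIV_deriv_iff_field_differentiable)
    have bound: "\<forall>\<^sub>F n in sequentially. \<forall>w\<in>ball 0 R.
            norm (damped_term T a n w) \<le> exp (- T * (ln (real n))\<^sup>2) * norm (a n) * real n powr R"
    proof (intro always_eventually allI ballI)
      fix n w assume "w \<in> ball (0::complex) R"
      then have "- Re w \<le> R"
        using abs_Re_le_cmod[of w] by simp
      then show "norm (damped_term T a n w) \<le> exp (- T * (ln (real n))\<^sup>2) * norm (a n) * real n powr R"
        unfolding norm_damped_term by (cases "n = 0") (auto intro!: mult_left_mono powr_mono)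
    qed
    obtain g g' where g: "\<forall>w\<in>ball 0 R. ((\<lambda>n. damped_term T a n w) sums g w)
        \<and> ((\<lambda>n. deriv (damped_term T a n) w) sums g' w) \<and> (g has_field_derivative g' w) (at w)"
      using series_and_derivative_comparison[OF open_ball summable_damped_weight deriv bound] by blast
    have z: "z \<in> ball 0 R" unfolding R_def by simp
    have eq: "g w = (\<Sum>n. damped_term T a n w)" if "w \<in> ball 0 R" for w
      using g that by (simp add: sums_iff)
    have "(g has_field_derivative g' z) (at z)"
      using g z by blast
    then have "((\<lambda>s. \<Sum>n. damped_term T a n s) has_field_derivative g' z) (at z)"
      by (rule has_field_derivative_transform_within_open[OF _ open_ball z eq])
    then show ?thesis
      using field_differentiable_def by blast
  qed
  then show ?thesis
    by (simp add: holomorphic_on_def field_differentiable_at_within)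
qed

lemma damped_series_exp_affine_imp_monomial:
  assumes exp_affine: "\<And>z. (\<Sum>n. damped_term T a n z) = exp (c + of_real u * z)"
  obtains n0 where "n0 \<ge> 1" "\<And>n. n \<ge> 1 \<Longrightarrow> n \<noteq> n0 \<Longrightarrow> a n = 0"
proof -
  define b where "b n = damped_term T a n 0" for n
  have b_term: "b n * of_nat n powr (- s) = damped_term T a n s" for n s
    by (cases "n = 0") (simp_all add: b_def damped_term_def)
  have "summable (\<lambda>n. norm (b n))"
    unfolding b_def by (rule summable_norm_damped_term)
  moreover have "(\<Sum>n. b n * of_nat n powr (- of_real x)) = exp c * of_real (exp (u * x))" for x
    using exp_affine[of "of_real x"] by (simp add: b_term exp_add flip: exp_of_real)
  ultimately obtain n0 where n0: "n0 \<ge> 1" and b_zero: "\<And>n. n \<ge> 1 \<Longrightarrow> n \<noteq> n0 \<Longrightarrow> b n = 0"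
    using dirichlet_series_eq_exp_imp_monomial by blast
  show ?thesis
  proof (rule that[OF n0])
    fix n assume "n \<ge> 1" "n \<noteq> n0"
    then show "a n = 0"
      using b_zero[of n] by (simp add: b_def damped_term_def)
  qed
qed

end

section \<open>The extended Selberg class\<close>

lemma ext_selberg_coeff_bound:
  assumes "ext_selberg a"
  obtains C where "\<And>n. n \<ge> 1 \<Longrightarrow> norm (a n) \<le> C * real n powr 2"
proof -
  have "summable (\<lambda>n. norm (a n * of_nat n powr (- of_real 2)))"
    using assms unfolding ext_selberg_def by simp
  then show ?thesis
    using dirichlet_coeff_bound that by blast
qed

lemma dir_series_monomial:
  assumes "n0 \<ge> 1" and "\<And>n. n \<ge> 1 \<Longrightarrow> n \<noteq> n0 \<Longrightarrow> a n = 0"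
  shows "dir_series a s = a n0 * of_nat n0 powr (- s)"
proof -
  have "(\<lambda>n. a n * of_nat n powr (- s)) = (\<lambda>n. if n = n0 then a n0 * of_nat n0 powr (- s) else 0)"
    using assms by (force simp: fun_eq_iff not_less_eq_eq)
  then show ?thesis
    unfolding dir_series_def by (simp add: sums_unique[OF sums_single, symmetric])
qed

lemma entire_eq_on_halfplane_imp_eq:
  fixes f g :: "complex \<Rightarrow> complex"
  assumes "f holomorphic_on UNIV" "g holomorphic_on UNIV" and "\<And>s. Re s > \<sigma> \<Longrightarrow> f s = g s"
  shows "f s = g s"
proof (rule analytic_continuation_open[of "{s. Re s > \<sigma>}" UNIV f g s])
  show "{s. Re s > \<sigma>} \<noteq> {}"
    using exI[of "\<lambda>s. Re s > \<sigma>" "of_real (\<sigma> + 1)"] by auto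
qed (use assms in \<open>auto simp: open_halfspace_Re_gt connected_UNIV\<close>)

lemma Re_pos_not_nonpos_Ints: "Re z > 0 \<Longrightarrow> z \<notin> \<int>\<^sub>\<le>\<^sub>0"
  by (auto elim!: nonpos_Ints_cases)

lemma rGamma_affine_zero_in_left_halfplane:
  assumes "\<omega> > 0" and "Re \<mu> \<ge> 0"
  obtains s where "Re s < 0" and "rGamma (of_real \<omega> * s + \<mu>) = 0"
proof
  let ?s = "(- \<mu> - 1) / of_real \<omega>"
  show "Re ?s < 0"
    using assms by (simp add: divide_neg_pos add_pos_nonneg)
  show "rGamma (of_real \<omega> * ?s + \<mu>) = 0"
    using assms by (simp add: rGamma_eq_zero_iff)
qed

lemma prod_Gamma_mult_prod_rGamma:
  assumes "finite I" and "\<And>i. i \<in> I \<Longrightarrow> z i \<notin> \<int>\<^sub>\<le>\<^sub>0"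
  shows "(\<Prod>i\<in>I. Gamma (z i)) * (\<Prod>i\<in>I. rGamma (z i)) = 1"
proof -
  have "Gamma (z i) * rGamma (z i) = 1" if "i \<in> I" for i
    using assms(2)[OF that] by (simp add: rGamma_inverse_Gamma Gamma_eq_zero_iff)
  then show ?thesis
    by (simp add: prod.distrib[symmetric])
qed

text \<open>A Dirichlet monomial is zero-free, whereas \<open>F = \<xi>/\<gamma>\<close> must vanish at the poles of the
  gamma factor.\<close>
lemma ext_selberg_not_monomial:
  assumes sel: "ext_selberg a" and n0: "n0 \<ge> 1"
      and mono: "\<And>n. n \<ge> 1 \<Longrightarrow> n \<noteq> n0 \<Longrightarrow> a n = 0"
  shows False
proof -
  from sel obtain m :: nat and \<alpha> :: complex and Q :: real and k :: nat
      and \<omega> :: "nat \<Rightarrow> real" and \<mu> :: "nat \<Rightarrow> complex" and Xi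
    where nonzero: "\<exists>s. Re s > 1 \<and> dir_series a s \<noteq> 0"
      and \<alpha>: "\<alpha> \<noteq> 0" and Q: "Q > 0" and k: "k \<ge> 1" and \<omega>\<mu>: "\<forall>i<k. \<omega> i > 0 \<and> Re (\<mu> i) \<ge> 0"
      and Xi: "Xi holomorphic_on UNIV"
      and Xi_eq: "\<And>s. Re s > 1 \<Longrightarrow> Xi s = \<alpha> * s ^ m * (s - 1) ^ m * of_real Q powr s *
                     (\<Prod>i<k. Gamma (of_real (\<omega> i) * s + \<mu> i)) * dir_series a s"
    unfolding ext_selberg_def by blast
  have a_n0: "a n0 \<noteq> 0"
    using nonzero by (auto simp: dir_series_monomial[OF n0 mono])
  define P where "P s = (\<Prod>i<k. rGamma (of_real (\<omega> i) * s + \<mu> i))" for s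
  define R where "R s = \<alpha> * s ^ m * (s - 1) ^ m * of_real Q powr s * (a n0 * of_nat n0 powr (- s))" for s
  have "Xi s * P s = R s" if "Re s > 1" for s
  proof -
    have "Re (of_real (\<omega> i) * s + \<mu> i) > 0" if "i < k" for i
      using \<omega>\<mu> that \<open>Re s > 1\<close> by (simp add: add_pos_nonneg)
    then have "(\<Prod>i<k. Gamma (of_real (\<omega> i) * s + \<mu> i)) * P s = 1"
      unfolding P_def by (intro prod_Gamma_mult_prod_rGamma Re_pos_not_nonpos_Ints) auto
    then show ?thesis
      using Xi_eq[of s] that by (simp add: R_def dir_series_monomial[OF n0 mono] ac_simps)
  qed
  moreover have "(\<lambda>s. Xi s * P s) holomorphic_on UNIV" "R holomorphic_on UNIV"
    unfolding P_def R_def by (intro holomorphic_intros Xi)+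
  ultimately have continued: "Xi s * P s = R s" for s
    using entire_eq_on_halfplane_imp_eq[of "\<lambda>s. Xi s * P s" R 1 s] by simp
  obtain s0 where s0: "Re s0 < 0" "rGamma (of_real (\<omega> 0) * s0 + \<mu> 0) = 0"
    using rGamma_affine_zero_in_left_halfplane \<omega>\<mu> k by (metis less_le_trans zero_less_one)
  then have "P s0 = 0"
    unfolding P_def using k by (intro prod_zero) auto
  moreover have "R s0 \<noteq> 0"
  proof -
    have "s0 \<noteq> 0" "s0 - 1 \<noteq> 0"
      using s0(1) by auto
    then show ?thesis
      using \<alpha> Q a_n0 n0 by (simp add: R_def powr_def)
  qed
  ultimately show False
    using continued[of s0] by simp
qed

theorem mainTheorem10:
  fixes a :: "nat \<Rightarrow> complex" and t :: real
  assumes "ext_selberg a" and "t < 0"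
  shows "\<exists>s. deformed a t s = 0"
proof (rule ccontr)
  assume no_zero: "\<nexists>s. deformed a t s = 0"
  define T where "T = \<bar>t\<bar> / 4"
  obtain C where "\<And>n. n \<ge> 1 \<Longrightarrow> norm (a n) \<le> C * real n powr 2"
    using ext_selberg_coeff_bound[OF assms(1)] by blast
  then interpret gaussian_damped_dirichlet T C 2 a
    by unfold_locales (use assms(2) in \<open>simp_all add: T_def\<close>)
  have deformed_eq: "deformed a t s = (\<Sum>n. damped_term T a n s)" for s
    by (simp add: deformed_def damped_term_def T_def)
  have nonzero: "(\<Sum>n. damped_term T a n z) \<noteq> 0" for z
    using no_zero by (simp add: deformed_eq)
  have bounded: "norm (\<Sum>n. damped_term T a n z) \<le> damped_majorant T a 0" if "Re z \<ge> 0" for z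
    using norm_damped_series_le[of z] damped_majorant_antimono[OF that] by linarith
  obtain c u where "\<And>z. (\<Sum>n. damped_term T a n z) = exp (c + of_real u * z)"
    using zero_free_entire_exp_affine[OF holomorphic_damped_series nonzero
          norm_damped_series_le_exp_square bounded] by blast
  then obtain n0 where "n0 \<ge> 1" "\<And>n. n \<ge> 1 \<Longrightarrow> n \<noteq> n0 \<Longrightarrow> a n = 0"
    using damped_series_exp_affine_imp_monomial by blast
  then show False
    by (rule ext_selberg_not_monomial[OF assms(1)])
qed

end
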